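(* Let $(X,\perp,Y,T)$ be an implicative frame, and let $x,z\in X$ be arbitrary. Then: (1) $\Gamma x\cap\Gamma z\subseteq\Gamma x\odot\Gamma z$ iff $R_\le xz\subseteq R^{111}xz$; (2) $\Gamma x\odot\Gamma z\subseteq\Gamma x\cap\Gamma z$ iff $R^{111}xz\subseteq R_\le xz$; (3) the algebra $(\mathcal{G}(X),\subseteq,\cap,\vee,\bot,X,\Rightarrow)$ is a complete Heyting algebra in which $\Rightarrow$ is the residual of intersection iff $R^{111}xz=R_\le xz$ for all $x,z\in X$.
   Context: A sorted frame (polarity) is a triple $(X,\perp,Y)$ with $X,Y$ nonempty sets and ${\perp}\subseteq X\times Y$. For $U\subseteq X$ let $U'=\{y\in Y:\forall x\in U\ x\perp y\}$, and for $V\subseteq Y$ let ${}'V=\{x\in X:\forall y\in V\ x\perp y\}$. $A\subseteq X$ is stable if $A={}'(A')$; $B\subseteq Y$ co-stable if $B=({}'B)'$. $\mathcal{G}(X)$, $\mathcal{G}(Y)$ are the complete lattices of stable, resp. co-stable, sets (meets are intersections; joins are closures of unions: ${}'(W')$ for $W\subseteq X$, $W''=({}'W)'$ for $W\subseteq Y$); $\bot$ is the least stable set. Preorders: $x\le z$ iff $\{x\}'\subseteq\{z\}'$ on $X$; $y\le v$ iff ${}'\{y\}\subseteq{}'\{v\}$ on $Y$; separated means both are partial orders. $\Gamma u$ is the set of elements above $u$. For $T\subseteq Y\times X\times Y$, $T'\subseteq X\times X\times Y$ is $uT'xv$ iff $\forall y\,(yTxv\Rightarrow u\perp y)$. An implicative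 frame is $(X,\perp,Y,T)$ with: (F0) $x\perp y$ iff $uT'xy$ for all $u\in X$; (F1) separated; (F2) each $\{y: yTxv\}$ equals $\Gamma w$ for some $w\in Y$; (F3) if $yTxv$, $x_1\le x$, $v_1\le v$ then $yTx_1v_1$; (F4) for all $u,x\in X,v\in Y$, $\{x_1:uT'x_1v\}$ is stable and $\{v_1:uT'xv_1\}$ is co-stable. Derived relations: $vR^{\partial11}zx$ iff $xT'zv$; $uR^{111}zx$ iff $\forall v\in Y(vR^{\partial11}zx\Rightarrow u\perp v)$; $R^{111}xz=\{u\in X:uR^{111}xz\}$. Upper bound relation: $uR_\le xz$ iff $x\le u$ and $z\le u$, and $R_\le xz=\{u:uR_\le xz\}$. Operations: $A\blacktriangleright B=(\{y:\exists x\in A\,\exists v\in B\ yTxv\})''$; $A\Rightarrow C={}'(A\blacktriangleright C')$; $A\odot F={}'(\{u:\exists x_1\in A\,\exists z_1\in F\ uR^{111}x_1z_1\}')$. *)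

theory Defs
  imports Main
begin

text \<open>A sorted frame (X, perp, Y): X and Y are the (nonempty) types 'a and 'b,
  perp :: 'a => 'b => bool.  T :: 'b => 'a => 'b => bool, with T y x v meaning yTxv.\<close>

definition rprime :: "('a \<Rightarrow> 'b \<Rightarrow> bool) \<Rightarrow> 'a set \<Rightarrow> 'b set" where
  "rprime perp U = {y. \<forall>x\<in>U. perp x y}"

definition lprime :: "('a \<Rightarrow> 'b \<Rightarrow> bool) \<Rightarrow> 'b set \<Rightarrow> 'a set" where
  "lprime perp V = {x. \<forall>y\<in>V. perp x y}"

definition stable :: "('a \<Rightarrow> 'b \<Rightarrow> bool) \<Rightarrow> 'a set \<Rightarrow> bool" where
  "stable perp A \<longleftrightarrow> A = lprime perp (rprime perp A)"

definition costable :: "('a \<Rightarrow> 'b \<Rightarrow> bool) \<Rightarrow> 'b set \<Rightarrow> bool" where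
  "costable perp B \<longleftrightarrow> B = rprime perp (lprime perp B)"

definition leX :: "('a \<Rightarrow> 'b \<Rightarrow> bool) \<Rightarrow> 'a \<Rightarrow> 'a \<Rightarrow> bool" where
  "leX perp x z \<longleftrightarrow> rprime perp {x} \<subseteq> rprime perp {z}"

definition leY :: "('a \<Rightarrow> 'b \<Rightarrow> bool) \<Rightarrow> 'b \<Rightarrow> 'b \<Rightarrow> bool" where
  "leY perp y v \<longleftrightarrow> lprime perp {y} \<subseteq> lprime perp {v}"

definition GammaX :: "('a \<Rightarrow> 'b \<Rightarrow> bool) \<Rightarrow> 'a \<Rightarrow> 'a set" where
  "GammaX perp u = {x. leX perp u x}"

definition GammaY :: "('a \<Rightarrow> 'b \<Rightarrow> bool) \<Rightarrow> 'b \<Rightarrow> 'b set" where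
  "GammaY perp w = {y. leY perp w y}"

definition Tp :: "('a \<Rightarrow> 'b \<Rightarrow> bool) \<Rightarrow> ('b \<Rightarrow> 'a \<Rightarrow> 'b \<Rightarrow> bool) \<Rightarrow> 'a \<Rightarrow> 'a \<Rightarrow> 'b \<Rightarrow> bool" where
  "Tp perp T u x v \<longleftrightarrow> (\<forall>y. T y x v \<longrightarrow> perp u y)"

definition implicative_frame :: "('a \<Rightarrow> 'b \<Rightarrow> bool) \<Rightarrow> ('b \<Rightarrow> 'a \<Rightarrow> 'b \<Rightarrow> bool) \<Rightarrow> bool" where
  "implicative_frame perp T \<longleftrightarrow>
     \<comment> \<open>F0\<close>
     (\<forall>x y. perp x y \<longleftrightarrow> (\<forall>u. Tp perp T u x y)) \<and>
     \<comment> \<open>F1: separated\<close>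
     (\<forall>x z. leX perp x z \<and> leX perp z x \<longrightarrow> x = z) \<and>
     (\<forall>y v. leY perp y v \<and> leY perp v y \<longrightarrow> y = v) \<and>
     \<comment> \<open>F2\<close>
     (\<forall>x v. \<exists>w. {y. T y x v} = GammaY perp w) \<and>
     \<comment> \<open>F3\<close>
     (\<forall>y x v x1 v1. T y x v \<and> leX perp x1 x \<and> leY perp v1 v \<longrightarrow> T y x1 v1) \<and>
     \<comment> \<open>F4\<close>
     (\<forall>u x v. stable perp {x1. Tp perp T u x1 v} \<and> costable perp {v1. Tp perp T u x v1})"

definition Rd11 :: "('a \<Rightarrow> 'b \<Rightarrow> bool) \<Rightarrow> ('b \<Rightarrow> 'a \<Rightarrow> 'b \<Rightarrow> bool) \<Rightarrow> 'b \<Rightarrow> 'a \<Rightarrow> 'a \<Rightarrow> bool" where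
  "Rd11 perp T v z x \<longleftrightarrow> Tp perp T x z v"

definition R111 :: "('a \<Rightarrow> 'b \<Rightarrow> bool) \<Rightarrow> ('b \<Rightarrow> 'a \<Rightarrow> 'b \<Rightarrow> bool) \<Rightarrow> 'a \<Rightarrow> 'a \<Rightarrow> 'a \<Rightarrow> bool" where
  "R111 perp T u z x \<longleftrightarrow> (\<forall>v. Rd11 perp T v z x \<longrightarrow> perp u v)"

definition R111set :: "('a \<Rightarrow> 'b \<Rightarrow> bool) \<Rightarrow> ('b \<Rightarrow> 'a \<Rightarrow> 'b \<Rightarrow> bool) \<Rightarrow> 'a \<Rightarrow> 'a \<Rightarrow> 'a set" where
  "R111set perp T x z = {u. R111 perp T u x z}"

definition Rle :: "('a \<Rightarrow> 'b \<Rightarrow> bool) \<Rightarrow> 'a \<Rightarrow> 'a \<Rightarrow> 'a \<Rightarrow> bool" where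
  "Rle perp u x z \<longleftrightarrow> leX perp x u \<and> leX perp z u"

definition Rleset :: "('a \<Rightarrow> 'b \<Rightarrow> bool) \<Rightarrow> 'a \<Rightarrow> 'a \<Rightarrow> 'a set" where
  "Rleset perp x z = {u. Rle perp u x z}"

definition btri :: "('a \<Rightarrow> 'b \<Rightarrow> bool) \<Rightarrow> ('b \<Rightarrow> 'a \<Rightarrow> 'b \<Rightarrow> bool) \<Rightarrow> 'a set \<Rightarrow> 'b set \<Rightarrow> 'b set" where
  "btri perp T A B = rprime perp (lprime perp {y. \<exists>x\<in>A. \<exists>v\<in>B. T y x v})"

definition fimp :: "('a \<Rightarrow> 'b \<Rightarrow> bool) \<Rightarrow> ('b \<Rightarrow> 'a \<Rightarrow> 'b \<Rightarrow> bool) \<Rightarrow> 'a set \<Rightarrow> 'a set \<Rightarrow> 'a set" where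
  "fimp perp T A C = lprime perp (btri perp T A (rprime perp C))"

definition fodot :: "('a \<Rightarrow> 'b \<Rightarrow> bool) \<Rightarrow> ('b \<Rightarrow> 'a \<Rightarrow> 'b \<Rightarrow> bool) \<Rightarrow> 'a set \<Rightarrow> 'a set \<Rightarrow> 'a set" where
  "fodot perp T A F = lprime perp (rprime perp {u. \<exists>x1\<in>A. \<exists>z1\<in>F. R111 perp T u x1 z1})"

text \<open>(G(X), subset, inter, join, bot, X, =>) is a complete Heyting algebra in which
  => is the residual of intersection: G(X) is a complete lattice of sets closed under
  arbitrary intersections (meet = intersection, top = X), => maps G(X) into G(X), and
  for stable A, B, C:  C \<inter> A \<subseteq> B  iff  C \<subseteq> A => B.\<close>
definition complete_heyting_residuated ::
  "('a \<Rightarrow> 'b \<Rightarrow> bool) \<Rightarrow> ('b \<Rightarrow> 'a \<Rightarrow> 'b \<Rightarrow> bool) \<Rightarrow> bool" where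
  "complete_heyting_residuated perp T \<longleftrightarrow>
     (\<forall>S. (\<forall>A\<in>S. stable perp A) \<longrightarrow> stable perp (\<Inter>S)) \<and>
     (\<forall>A C. stable perp A \<and> stable perp C \<longrightarrow> stable perp (fimp perp T A C)) \<and>
     (\<forall>A B C. stable perp A \<and> stable perp B \<and> stable perp C \<longrightarrow>
        (C \<inter> A \<subseteq> B \<longleftrightarrow> C \<subseteq> fimp perp T A B))"

end

theory Submission
  imports Defs
begin

text \<open>Condition (F3) makes \<open>R\<^sup>1\<^sup>1\<^sup>1\<close> antitone in both arguments, and (F4) makes
  \<open>R\<^sup>1\<^sup>1\<^sup>1 x z\<close> a stable set, so \<open>\<Gamma>x \<odot> \<Gamma>z\<close> collapses to \<open>R\<^sup>1\<^sup>1\<^sup>1 x z\<close>; since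
  \<open>R\<^sub>\<le> x z = \<Gamma>x \<inter> \<Gamma>z\<close>, parts (1) and (2) are then literal rewrites.
  (F4) also gives \<open>u T' x v \<longleftrightarrow> R\<^sup>1\<^sup>1\<^sup>1 x u \<subseteq> '{v}\<close>, hence for stable \<open>B\<close>:
  \<open>D \<subseteq> A \<Rightarrow> B\<close> iff \<open>R\<^sup>1\<^sup>1\<^sup>1 x u \<subseteq> B\<close> for all \<open>u \<in> D\<close>, \<open>x \<in> A\<close>.  Residuation of
  intersection says the same with \<open>\<Gamma>x \<inter> \<Gamma>u\<close> in place of \<open>R\<^sup>1\<^sup>1\<^sup>1 x u\<close>, because
  stable sets are upsets; testing it on principal upsets recovers \<open>R\<^sup>1\<^sup>1\<^sup>1 = R\<^sub>\<le>\<close>.\<close>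

lemma rprime_iff: "y \<in> rprime perp U \<longleftrightarrow> (\<forall>x\<in>U. perp x y)"
  by (simp add: rprime_def)

lemma lprime_rprime_lprime: "lprime perp (rprime perp (lprime perp V)) = lprime perp V"
  unfolding lprime_def rprime_def by blast

lemma stable_lprime: "stable perp (lprime perp V)"
  unfolding stable_def by (simp add: lprime_rprime_lprime)

lemma stable_Inter: "(\<And>A. A \<in> S \<Longrightarrow> stable perp A) \<Longrightarrow> stable perp (\<Inter>S)"
  unfolding stable_def lprime_def rprime_def by blast

lemma stable_Int: "stable perp A \<Longrightarrow> stable perp B \<Longrightarrow> stable perp (A \<inter> B)"
  unfolding stable_def lprime_def rprime_def by blast

lemma leX_iff: "leX perp x z \<longleftrightarrow> (\<forall>y. perp x y \<longrightarrow> perp z y)"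
  unfolding leX_def rprime_def by auto

lemma GammaX_eq_closure: "GammaX perp x = lprime perp (rprime perp {x})"
  unfolding GammaX_def leX_iff lprime_def rprime_def by auto

lemma stable_GammaX: "stable perp (GammaX perp x)"
  unfolding GammaX_eq_closure by (rule stable_lprime)

lemma self_in_GammaX: "x \<in> GammaX perp x"
  unfolding GammaX_def leX_def by simp

lemma stable_upward_closed:
  assumes "stable perp A" "a \<in> A" "leX perp a b"
  shows "b \<in> A"
proof -
  have "b \<in> lprime perp (rprime perp A)"
    using assms(2,3) unfolding leX_iff lprime_def rprime_def by blast
  moreover have "lprime perp (rprime perp A) = A"
    using assms(1) unfolding stable_def by (rule sym)
  ultimately show ?thesis
    by simp
qed

lemma GammaX_subset_stable: "stable perp A \<Longrightarrow> a \<in> A \<Longrightarrow> GammaX perp a \<subseteq> A"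
  unfolding GammaX_def using stable_upward_closed[of perp A a] by blast

lemma Rleset_eq_GammaX_Int: "Rleset perp x z = GammaX perp x \<inter> GammaX perp z"
  unfolding Rleset_def Rle_def GammaX_def by auto

lemma R111set_eq_lprime: "R111set perp T x z = lprime perp {v. Tp perp T z x v}"
  unfolding R111set_def R111_def Rd11_def lprime_def by auto

lemma stable_R111set: "stable perp (R111set perp T x z)"
  unfolding R111set_eq_lprime by (rule stable_lprime)

lemma fimp_eq_Tp:
  "fimp perp T A C = {u. \<forall>x\<in>A. \<forall>v\<in>rprime perp C. Tp perp T u x v}"
proof -
  have "fimp perp T A C = lprime perp {y. \<exists>x\<in>A. \<exists>v\<in>rprime perp C. T y x v}"
    unfolding fimp_def btri_def by (metis lprime_rprime_lprime lprime_def rprime_def)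
  then show ?thesis
    unfolding lprime_def Tp_def by auto
qed

lemma complete_heyting_residuated_iff:
  "complete_heyting_residuated perp T \<longleftrightarrow>
     (\<forall>A B C. stable perp A \<and> stable perp B \<and> stable perp C \<longrightarrow>
        (C \<inter> A \<subseteq> B \<longleftrightarrow> C \<subseteq> fimp perp T A B))"
  unfolding complete_heyting_residuated_def fimp_def by (simp add: stable_Inter stable_lprime)

context
  fixes perp :: "'a \<Rightarrow> 'b \<Rightarrow> bool" and T :: "'b \<Rightarrow> 'a \<Rightarrow> 'b \<Rightarrow> bool"
  assumes T_antitone: "\<And>y x v x1. T y x v \<Longrightarrow> leX perp x1 x \<Longrightarrow> T y x1 v"
    and costable_Tp: "\<And>u x. costable perp {v. Tp perp T u x v}"
begin

lemma Tp_iff_R111set: "Tp perp T u x v \<longleftrightarrow> (\<forall>w\<in>R111set perp T x u. perp w v)"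
proof -
  have "{v. Tp perp T u x v} = rprime perp (R111set perp T x u)"
    using costable_Tp[of u x] unfolding costable_def R111set_eq_lprime .
  then show ?thesis
    by (metis mem_Collect_eq rprime_iff)
qed

lemma R111set_antimono:
  assumes "leX perp x x1" "leX perp z z1"
  shows "R111set perp T x1 z1 \<subseteq> R111set perp T x z"
proof -
  have "Tp perp T z1 x1 v" if "Tp perp T z x v" for v
    using that assms T_antitone unfolding Tp_def leX_iff by blast
  then show ?thesis
    unfolding R111set_eq_lprime lprime_def by blast
qed

lemma fodot_GammaX:
  "fodot perp T (GammaX perp x) (GammaX perp z) = R111set perp T x z"
proof -
  have generators:
    "{u. \<exists>x1\<in>GammaX perp x. \<exists>z1\<in>GammaX perp z. R111 perp T u x1 z1} = R111set perp T x z"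
  proof
    show "{u. \<exists>x1\<in>GammaX perp x. \<exists>z1\<in>GammaX perp z. R111 perp T u x1 z1} \<subseteq> R111set perp T x z"
      using R111set_antimono unfolding GammaX_def R111set_def by blast
    show "R111set perp T x z \<subseteq> {u. \<exists>x1\<in>GammaX perp x. \<exists>z1\<in>GammaX perp z. R111 perp T u x1 z1}"
      using self_in_GammaX[of x perp] self_in_GammaX[of z perp] unfolding R111set_def by blast
  qed
  have "lprime perp (rprime perp (R111set perp T x z)) = R111set perp T x z"
    using stable_R111set unfolding stable_def by (rule sym)
  then show ?thesis
    unfolding fodot_def generators .
qed

lemma subset_fimp_iff:
  assumes "stable perp B"
  shows "D \<subseteq> fimp perp T A B \<longleftrightarrow> (\<forall>u\<in>D. \<forall>x\<in>A. R111set perp T x u \<subseteq> B)"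
proof -
  have "D \<subseteq> fimp perp T A B \<longleftrightarrow>
      (\<forall>u\<in>D. \<forall>x\<in>A. \<forall>v\<in>rprime perp B. \<forall>w\<in>R111set perp T x u. perp w v)"
    unfolding fimp_eq_Tp Tp_iff_R111set by blast
  also have "\<dots> \<longleftrightarrow> (\<forall>u\<in>D. \<forall>x\<in>A. R111set perp T x u \<subseteq> lprime perp (rprime perp B))"
    unfolding lprime_def by blast
  finally show ?thesis
    using assms unfolding stable_def by metis
qed

lemma residuated_imp_R111set_eq_Rleset:
  assumes residuated: "\<And>A B C. stable perp A \<Longrightarrow> stable perp B \<Longrightarrow> stable perp C \<Longrightarrow>
      C \<inter> A \<subseteq> B \<longleftrightarrow> C \<subseteq> fimp perp T A B"
  shows "R111set perp T x z = Rleset perp x z"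
proof -
  let ?Gx = "GammaX perp x" and ?Gz = "GammaX perp z"
  have stable_meet: "stable perp (?Gx \<inter> ?Gz)"
    by (intro stable_Int stable_GammaX)
  have "?Gz \<inter> ?Gx \<subseteq> ?Gx \<inter> ?Gz"
    by blast
  then have "?Gz \<subseteq> fimp perp T ?Gx (?Gx \<inter> ?Gz)"
    by (rule residuated[OF stable_GammaX stable_meet stable_GammaX, THEN iffD1])
  then have "R111set perp T x z \<subseteq> ?Gx \<inter> ?Gz"
    using self_in_GammaX[of x perp] self_in_GammaX[of z perp]
    unfolding subset_fimp_iff[OF stable_meet] by blast
  moreover have "?Gz \<subseteq> fimp perp T ?Gx (R111set perp T x z)"
    unfolding subset_fimp_iff[OF stable_R111set] GammaX_def using R111set_antimono by simp
  then have "?Gz \<inter> ?Gx \<subseteq> R111set perp T x z"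
    by (rule residuated[OF stable_GammaX stable_R111set stable_GammaX, THEN iffD2])
  ultimately show ?thesis
    unfolding Rleset_eq_GammaX_Int by blast
qed

lemma R111set_eq_Rleset_imp_residuated:
  assumes R111_Rle: "\<And>x z. R111set perp T x z = Rleset perp x z"
    and "stable perp A" "stable perp B" "stable perp C"
  shows "C \<inter> A \<subseteq> B \<longleftrightarrow> C \<subseteq> fimp perp T A B"
proof -
  have "C \<subseteq> fimp perp T A B \<longleftrightarrow> (\<forall>u\<in>C. \<forall>x\<in>A. GammaX perp x \<inter> GammaX perp u \<subseteq> B)"
    using subset_fimp_iff[OF \<open>stable perp B\<close>] by (simp add: R111_Rle Rleset_eq_GammaX_Int)
  also have "\<dots> \<longleftrightarrow> C \<inter> A \<subseteq> B"
  proof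
    assume principal: "\<forall>u\<in>C. \<forall>x\<in>A. GammaX perp x \<inter> GammaX perp u \<subseteq> B"
    show "C \<inter> A \<subseteq> B"
    proof
      fix w
      assume "w \<in> C \<inter> A"
      then show "w \<in> B"
        using principal self_in_GammaX[of w perp] by blast
    qed
  next
    assume "C \<inter> A \<subseteq> B"
    then show "\<forall>u\<in>C. \<forall>x\<in>A. GammaX perp x \<inter> GammaX perp u \<subseteq> B"
      using GammaX_subset_stable[OF \<open>stable perp A\<close>] GammaX_subset_stable[OF \<open>stable perp C\<close>]
      by blast
  qed
  finally show ?thesis ..
qed

lemma complete_heyting_residuated_iff_R111set_eq_Rleset:
  "complete_heyting_residuated perp T \<longleftrightarrow> (\<forall>x z. R111set perp T x z = Rleset perp x z)"
  unfolding complete_heyting_residuated_iff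
proof
  assume "\<forall>A B C. stable perp A \<and> stable perp B \<and> stable perp C \<longrightarrow>
      (C \<inter> A \<subseteq> B \<longleftrightarrow> C \<subseteq> fimp perp T A B)"
  then show "\<forall>x z. R111set perp T x z = Rleset perp x z"
    by (intro allI residuated_imp_R111set_eq_Rleset) blast
next
  assume "\<forall>x z. R111set perp T x z = Rleset perp x z"
  then show "\<forall>A B C. stable perp A \<and> stable perp B \<and> stable perp C \<longrightarrow>
      (C \<inter> A \<subseteq> B \<longleftrightarrow> C \<subseteq> fimp perp T A B)"
    by (intro allI impI R111set_eq_Rleset_imp_residuated) auto
qed

end

lemma implicative_frame_antitone:
  "implicative_frame perp T \<Longrightarrow> T y x v \<Longrightarrow> leX perp x1 x \<Longrightarrow> T y x1 v"
  unfolding implicative_frame_def leY_def by blast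

lemma implicative_frame_costable_Tp:
  "implicative_frame perp T \<Longrightarrow> costable perp {v. Tp perp T u x v}"
  unfolding implicative_frame_def by blast

theorem proposition3p14:
  fixes perp :: "'a \<Rightarrow> 'b \<Rightarrow> bool" and T :: "'b \<Rightarrow> 'a \<Rightarrow> 'b \<Rightarrow> bool"
  assumes "implicative_frame perp T"
  shows "(\<forall>x z. GammaX perp x \<inter> GammaX perp z \<subseteq> fodot perp T (GammaX perp x) (GammaX perp z)
                \<longleftrightarrow> Rleset perp x z \<subseteq> R111set perp T x z)
       \<and> (\<forall>x z. fodot perp T (GammaX perp x) (GammaX perp z) \<subseteq> GammaX perp x \<inter> GammaX perp z
                \<longleftrightarrow> R111set perp T x z \<subseteq> Rleset perp x z)
       \<and> (complete_heyting_residuated perp T \<longleftrightarrow> (\<forall>x z. R111set perp T x z = Rleset perp x z))"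
proof -
  note antitone = implicative_frame_antitone[OF assms]
    and costable = implicative_frame_costable_Tp[OF assms]
  show ?thesis
    by (simp add: fodot_GammaX[OF antitone costable] Rleset_eq_GammaX_Int
        complete_heyting_residuated_iff_R111set_eq_Rleset[OF antitone costable])
qed

end
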